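(* Let $R$ be a commutative ring, $M$ an $R$-module, $y_1,\ldots,y_r\in R$, $i>0$ an integer, and $I\subseteq R$ an ideal with $I\supseteq(y_1,\ldots,y_r)$. Assume that $I\,H_i(y_A;M)=0$ for all $A\subseteq\{1,\ldots,r\}$. Then $I\,H_{i+1}(y_A;M)=0$ for all $A\subseteq\{1,\ldots,r\}$.
   Context: For $A\subseteq\{1,\ldots,r\}$, $y_A=\{y_j:j\in A\}$ and $H_i(y_A;M)$ denotes the $i$-th Koszul homology of $M$ with respect to the elements $y_A$. *)

theory Defs
  imports Complex_Main
begin

text \<open>A chain of degree i is a function from finite sets of indices to M supported on
  the i-element subsets of A; the coefficient at T stands for e_T tensor m.\<close>

definition koszul_chains :: "nat set \<Rightarrow> nat \<Rightarrow> (nat set \<Rightarrow> 'b::ab_group_add) set" where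
  "koszul_chains A i = {c. \<forall>T. c T \<noteq> 0 \<longrightarrow> T \<subseteq> A \<and> card T = i}"

text \<open>Differential K_i \<rightarrow> K_(i-1):
  d(e_S m) = sum over j in S of (-1)^(number of k in S with k < j) y_j e_(S-{j}) m.
  For i = 0 it is the zero map.\<close>

definition koszul_d ::
  "('a::comm_ring_1 \<Rightarrow> 'b::ab_group_add \<Rightarrow> 'b) \<Rightarrow> (nat \<Rightarrow> 'a) \<Rightarrow> nat set \<Rightarrow> nat
     \<Rightarrow> (nat set \<Rightarrow> 'b) \<Rightarrow> (nat set \<Rightarrow> 'b)" where
  "koszul_d scale y A i c = (\<lambda>T.
     if 0 < i \<and> T \<subseteq> A \<and> card T + 1 = i then
       (\<Sum>j\<in>A - T. scale ((-1) ^ card {k\<in>T. k < j} * y j) (c (insert j T)))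
     else 0)"

definition koszul_cycles ::
  "('a::comm_ring_1 \<Rightarrow> 'b::ab_group_add \<Rightarrow> 'b) \<Rightarrow> (nat \<Rightarrow> 'a) \<Rightarrow> nat set \<Rightarrow> nat
     \<Rightarrow> (nat set \<Rightarrow> 'b) set" where
  "koszul_cycles scale y A i = {c \<in> koszul_chains A i. koszul_d scale y A i c = (\<lambda>_. 0)}"

definition koszul_boundaries ::
  "('a::comm_ring_1 \<Rightarrow> 'b::ab_group_add \<Rightarrow> 'b) \<Rightarrow> (nat \<Rightarrow> 'a) \<Rightarrow> nat set \<Rightarrow> nat
     \<Rightarrow> (nat set \<Rightarrow> 'b) set" where
  "koszul_boundaries scale y A i = koszul_d scale y A (Suc i) ` koszul_chains A (Suc i)"

definition koszul_annihilates ::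
  "('a::comm_ring_1 \<Rightarrow> 'b::ab_group_add \<Rightarrow> 'b) \<Rightarrow> 'a set \<Rightarrow> (nat \<Rightarrow> 'a) \<Rightarrow> nat set \<Rightarrow> nat \<Rightarrow> bool" where
  "koszul_annihilates scale I y A i \<longleftrightarrow>
     (\<forall>a\<in>I. \<forall>z\<in>koszul_cycles scale y A i. (\<lambda>T. scale a (z T)) \<in> koszul_boundaries scale y A i)"

end

theory Submission
  imports Defs
begin

text \<open>Fix \<open>a \<in> I\<close> and a cycle \<open>z\<close> of degree \<open>i + 1\<close> on \<open>A\<close>. Removing the indices of \<open>A\<close>
  one at a time, we keep \<open>a z\<close> homologous on \<open>A\<close> to a cycle \<open>u\<close> supported on fewer and fewer
  indices; once none is left, \<open>u = 0\<close> and \<open>a z\<close> is a boundary.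

  To remove \<open>j\<close>, write \<open>u = u' + e\<^sub>j \<wedge> u''\<close> with \<open>u'\<close>, \<open>u''\<close> free of \<open>e\<^sub>j\<close>. Contracting
  \<open>a z - u = d X\<close> by \<open>e\<^sub>j\<close> shows that \<open>u''\<close> is a boundary on \<open>A - {j}\<close>, because \<open>a\<close> kills
  the class of the contracted cycle \<open>z\<close>. Since every \<open>y\<^sub>s\<close> kills \<open>H\<^sub>i\<close>, the map from
  \<open>H\<^sub>i(y\<^sub>E; M)\<close> to \<open>H\<^sub>i(y\<^sub>F; M)\<close>, \<open>F = E \<union> {s}\<close>, is injective (its kernel is \<open>y\<^sub>s H\<^sub>i(y\<^sub>E; M)\<close>),
  so \<open>u'' = d G\<close> already on the support of \<open>u''\<close>. Then \<open>u' + y\<^sub>j G = u + d (e\<^sub>j \<wedge> G)\<close> is a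
  cycle free of \<open>j\<close>.\<close>

text \<open>Writing a chain as \<open>c = c' + e\<^sub>j \<wedge> c''\<close> with \<open>c'\<close>, \<open>c''\<close> free of \<open>e\<^sub>j\<close>, we have
  \<open>koszul_omit j c = c'\<close> and \<open>koszul_contract scale j c = c''\<close>; \<open>koszul_wedge scale j G = e\<^sub>j \<wedge> G\<close>.\<close>

definition koszul_omit :: "nat \<Rightarrow> (nat set \<Rightarrow> 'b::zero) \<Rightarrow> nat set \<Rightarrow> 'b" where
  "koszul_omit j c = (\<lambda>T. if j \<in> T then 0 else c T)"

definition koszul_contract ::
  "('a::comm_ring_1 \<Rightarrow> 'b::ab_group_add \<Rightarrow> 'b) \<Rightarrow> nat \<Rightarrow> (nat set \<Rightarrow> 'b) \<Rightarrow> nat set \<Rightarrow> 'b" where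
  "koszul_contract scale j c =
     (\<lambda>T. if j \<in> T then 0 else scale ((-1) ^ card {k\<in>T. k < j}) (c (insert j T)))"

definition koszul_wedge ::
  "('a::comm_ring_1 \<Rightarrow> 'b::ab_group_add \<Rightarrow> 'b) \<Rightarrow> nat \<Rightarrow> (nat set \<Rightarrow> 'b) \<Rightarrow> nat set \<Rightarrow> 'b" where
  "koszul_wedge scale j G =
     (\<lambda>T. if j \<in> T then scale ((-1) ^ card {k\<in>T. k < j}) (G (T - {j})) else 0)"

lemma minus_one_power_card_less_insert:
  assumes "finite T" "j \<notin> T"
  shows "((-1::'a::comm_ring_1) ^ card {k\<in>insert j T. k < l}) =
     (if j < l then - ((-1) ^ card {k\<in>T. k < l}) else (-1) ^ card {k\<in>T. k < l})"
proof (cases "j < l")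
  case True
  then have "{k\<in>insert j T. k < l} = insert j {k\<in>T. k < l}" by auto
  moreover have "card (insert j {k\<in>T. k < l}) = Suc (card {k\<in>T. k < l})"
    using assms by (intro card_insert_disjoint) auto
  ultimately show ?thesis using True by simp
next
  case False
  then have "{k\<in>insert j T. k < l} = {k\<in>T. k < l}" by auto
  then show ?thesis using False by simp
qed

lemma minus_one_power_card_less_swap:
  fixes j l :: "'b::linorder"
  assumes "finite T" "j \<notin> T" "l \<notin> T" "j \<noteq> l"
  shows "(-1::'a::comm_ring_1) ^ card {k\<in>T. k < j} * (-1) ^ card {k\<in>insert j T. k < l} =
         - ((-1) ^ card {k\<in>T. k < l} * (-1) ^ card {k\<in>insert l T. k < j})"
  unfolding minus_one_power_card_less_insert[OF assms(1,2)] minus_one_power_card_less_insert[OF assms(1,3)]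
  using assms(4) by (cases j l rule: linorder_cases) auto

subsection \<open>Chains\<close>

lemma koszul_chainsD: "c \<in> koszul_chains A n \<Longrightarrow> c T \<noteq> 0 \<Longrightarrow> T \<subseteq> A \<and> card T = n"
  unfolding koszul_chains_def by simp

lemma koszul_chains_eq_0: "c \<in> koszul_chains A n \<Longrightarrow> \<not> (T \<subseteq> A \<and> card T = n) \<Longrightarrow> c T = 0"
  using koszul_chainsD by blast

lemma koszul_chains_mono: "c \<in> koszul_chains A n \<Longrightarrow> A \<subseteq> B \<Longrightarrow> c \<in> koszul_chains B n"
  unfolding koszul_chains_def by blast

lemma koszul_chains_zero: "(\<lambda>_. 0) \<in> koszul_chains A n"
  unfolding koszul_chains_def by simp

lemma koszul_chains_add:
  "c \<in> koszul_chains A n \<Longrightarrow> e \<in> koszul_chains A n \<Longrightarrow> (\<lambda>T. c T + e T) \<in> koszul_chains A n"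
  unfolding koszul_chains_def by (simp, metis add.right_neutral)

lemma koszul_chains_diff:
  "c \<in> koszul_chains A n \<Longrightarrow> e \<in> koszul_chains A n \<Longrightarrow> (\<lambda>T. c T - e T) \<in> koszul_chains A n"
  unfolding koszul_chains_def by (simp, metis)

lemma koszul_chains_empty_Suc: "c \<in> koszul_chains {} (Suc n) \<Longrightarrow> c = (\<lambda>_. 0)"
  unfolding koszul_chains_def by fastforce

lemma koszul_omit_chain: "c \<in> koszul_chains A n \<Longrightarrow> koszul_omit j c \<in> koszul_chains (A - {j}) n"
  unfolding koszul_chains_def koszul_omit_def by auto

context module
begin

lemma koszul_chains_scale: "c \<in> koszul_chains A n \<Longrightarrow> (\<lambda>T. scale b (c T)) \<in> koszul_chains A n"
  unfolding koszul_chains_def by (simp, metis scale_zero_right)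

lemma koszul_contract_chain:
  assumes "finite A" "c \<in> koszul_chains A (Suc n)"
  shows "koszul_contract scale j c \<in> koszul_chains (A - {j}) n"
  unfolding koszul_chains_def
proof (intro CollectI allI impI)
  fix T assume "koszul_contract scale j c T \<noteq> 0"
  then have j: "j \<notin> T" and nz: "c (insert j T) \<noteq> 0"
    unfolding koszul_contract_def by (auto split: if_splits)
  have jT: "insert j T \<subseteq> A \<and> card (insert j T) = Suc n"
    using koszul_chainsD[OF assms(2) nz] .
  then have "finite T" using assms(1) by (meson finite_insert finite_subset)
  with j jT show "T \<subseteq> A - {j} \<and> card T = n" by auto
qed

lemma koszul_wedge_chain:
  assumes "finite A" "j \<in> A" "G \<in> koszul_chains (A - {j}) n"
  shows "koszul_wedge scale j G \<in> koszul_chains A (Suc n)"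
  unfolding koszul_chains_def
proof (intro CollectI allI impI)
  fix T assume "koszul_wedge scale j G T \<noteq> 0"
  then have j: "j \<in> T" and nz: "G (T - {j}) \<noteq> 0"
    unfolding koszul_wedge_def by (auto split: if_splits)
  have jT: "T - {j} \<subseteq> A - {j} \<and> card (T - {j}) = n"
    using koszul_chainsD[OF assms(3) nz] .
  then have "T \<subseteq> A" using j assms(2) by auto
  moreover from this have "finite T" using assms(1) by (rule finite_subset)
  ultimately show "T \<subseteq> A \<and> card T = Suc n" using j jT by (metis card_Suc_Diff1)
qed

lemma koszul_d_zero: "koszul_d scale y A n (\<lambda>_. 0) = (\<lambda>_. 0)"
  unfolding koszul_d_def by auto

lemma koszul_d_add:
  "koszul_d scale y A n (\<lambda>T. c T + e T) = (\<lambda>T. koszul_d scale y A n c T + koszul_d scale y A n e T)"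
  unfolding koszul_d_def by (auto simp: scale_right_distrib sum.distrib)

lemma koszul_d_diff:
  "koszul_d scale y A n (\<lambda>T. c T - e T) = (\<lambda>T. koszul_d scale y A n c T - koszul_d scale y A n e T)"
  unfolding koszul_d_def by (auto simp: scale_right_diff_distrib sum_subtractf)

lemma koszul_d_scale:
  "koszul_d scale y A n (\<lambda>T. scale b (c T)) = (\<lambda>T. scale b (koszul_d scale y A n c T))"
  unfolding koszul_d_def by (auto simp: scale_sum_right mult_ac intro!: sum.cong)

lemma koszul_d_superset:
  assumes "finite A" "D \<subseteq> A" "c \<in> koszul_chains D n"
  shows "koszul_d scale y A n c = koszul_d scale y D n c"
proof
  fix T
  have c_out: "c (insert l T) = 0" if "\<not> insert l T \<subseteq> D" for l
    using koszul_chains_eq_0[OF assms(3)] that by blast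
  show "koszul_d scale y A n c T = koszul_d scale y D n c T"
  proof (cases "T \<subseteq> D")
    case True
    have "(\<Sum>l\<in>A - T. scale ((-1) ^ card {k\<in>T. k < l} * y l) (c (insert l T)))
        = (\<Sum>l\<in>D - T. scale ((-1) ^ card {k\<in>T. k < l} * y l) (c (insert l T)))"
    proof (rule sum.mono_neutral_right)
      show "\<forall>l\<in>A - T - (D - T). scale ((-1) ^ card {k\<in>T. k < l} * y l) (c (insert l T)) = 0"
      proof
        fix l assume "l \<in> A - T - (D - T)"
        then have "\<not> insert l T \<subseteq> D" by auto
        then show "scale ((-1) ^ card {k\<in>T. k < l} * y l) (c (insert l T)) = 0" by (simp add: c_out)
      qed
    qed (use assms(1,2) in auto)
    then show ?thesis using True assms(2) unfolding koszul_d_def by auto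
  next
    case False
    then have "c (insert l T) = 0" for l by (intro c_out) auto
    then show ?thesis unfolding koszul_d_def by simp
  qed
qed

lemma koszul_contract_d_at:
  assumes "finite A" "j \<in> A" "T \<subseteq> A - {j}" "card T + 1 = n"
  shows "koszul_contract scale j (koszul_d scale y A (Suc n) c) T =
         - koszul_d scale y (A - {j}) n (koszul_contract scale j c) T"
proof -
  have j: "j \<notin> T" and "0 < n" using assms(3,4) by auto
  have T: "finite T" using assms(1,3) by (meson Diff_subset finite_subset)
  have "insert j T \<subseteq> A \<and> card (insert j T) + 1 = Suc n"
    using assms(2-4) T j by auto
  moreover have "A - insert j T = A - {j} - T" by auto
  ultimately have "koszul_contract scale j (koszul_d scale y A (Suc n) c) T =
      scale ((-1) ^ card {k\<in>T. k < j}) (\<Sum>l\<in>A - {j} - T.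
        scale ((-1) ^ card {k\<in>insert j T. k < l} * y l) (c (insert l (insert j T))))"
    using j unfolding koszul_contract_def koszul_d_def by simp
  also have "\<dots> = (\<Sum>l\<in>A - {j} - T.
      - scale ((-1) ^ card {k\<in>T. k < l} * y l) (koszul_contract scale j c (insert l T)))"
    unfolding scale_sum_right
  proof (rule sum.cong[OF refl])
    fix l assume "l \<in> A - {j} - T"
    then have l: "l \<notin> T" "j \<noteq> l" by auto
    have "(-1::'a) ^ card {k\<in>T. k < j} * ((-1) ^ card {k\<in>insert j T. k < l} * y l)
        = - (((-1) ^ card {k\<in>T. k < l} * y l) * (-1) ^ card {k\<in>insert l T. k < j})"
      unfolding mult.assoc[symmetric] minus_one_power_card_less_swap[OF T j l] by (simp add: mult_ac)
    moreover have "koszul_contract scale j c (insert l T) =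
        scale ((-1) ^ card {k\<in>insert l T. k < j}) (c (insert j (insert l T)))"
      using l j unfolding koszul_contract_def by simp
    moreover have "insert l (insert j T) = insert j (insert l T)" by auto
    ultimately show "scale ((-1) ^ card {k\<in>T. k < j})
          (scale ((-1) ^ card {k\<in>insert j T. k < l} * y l) (c (insert l (insert j T))))
        = - scale ((-1) ^ card {k\<in>T. k < l} * y l) (koszul_contract scale j c (insert l T))"
      by (simp flip: scale_minus_left)
  qed
  also have "\<dots> = - koszul_d scale y (A - {j}) n (koszul_contract scale j c) T"
    using assms(3,4) \<open>0 < n\<close> unfolding koszul_d_def by (simp add: sum_negf)
  finally show ?thesis .
qed

lemma koszul_contract_d:
  assumes "finite A" "j \<in> A"
  shows "koszul_contract scale j (koszul_d scale y A (Suc n) c) =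
         (\<lambda>T. - koszul_d scale y (A - {j}) n (koszul_contract scale j c) T)"
proof
  fix T
  show "koszul_contract scale j (koszul_d scale y A (Suc n) c) T =
         - koszul_d scale y (A - {j}) n (koszul_contract scale j c) T"
  proof (cases "T \<subseteq> A - {j} \<and> card T + 1 = n")
    case True
    then show ?thesis using koszul_contract_d_at[OF assms] by blast
  next
    case False
    have "\<not> (insert j T \<subseteq> A \<and> card (insert j T) + 1 = Suc n)" if "j \<notin> T"
    proof
      assume jT: "insert j T \<subseteq> A \<and> card (insert j T) + 1 = Suc n"
      then have "finite T" using assms(1) by (meson finite_insert finite_subset)
      with jT that False show False by auto
    qed
    then have "koszul_contract scale j (koszul_d scale y A (Suc n) c) T = 0"
      unfolding koszul_contract_def koszul_d_def by auto
    moreover have "koszul_d scale y (A - {j}) n (koszul_contract scale j c) T = 0"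
      using False unfolding koszul_d_def by auto
    ultimately show ?thesis by simp
  qed
qed

lemma koszul_omit_d:
  assumes "finite A" "j \<in> A" "c \<in> koszul_chains A n"
  shows "koszul_omit j (koszul_d scale y A n c) =
         (\<lambda>T. koszul_d scale y (A - {j}) n (koszul_omit j c) T + scale (y j) (koszul_contract scale j c T))"
proof
  fix T
  show "koszul_omit j (koszul_d scale y A n c) T =
         koszul_d scale y (A - {j}) n (koszul_omit j c) T + scale (y j) (koszul_contract scale j c T)"
  proof (cases "j \<notin> T \<and> 0 < n \<and> T \<subseteq> A \<and> card T + 1 = n")
    case False
    have "c (insert j T) = 0" if "j \<notin> T"
    proof (rule ccontr)
      assume "c (insert j T) \<noteq> 0"
      then have jT: "insert j T \<subseteq> A \<and> card (insert j T) = n" by (rule koszul_chainsD[OF assms(3)])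
      then have "finite T" using assms(1) by (meson finite_insert finite_subset)
      with jT that False show False by auto
    qed
    then show ?thesis
      using False unfolding koszul_contract_def koszul_d_def koszul_omit_def by auto
  next
    case True
    have split: "A - T = insert j (A - {j} - T)" using True assms(2) by auto
    have "koszul_omit j (koszul_d scale y A n c) T =
        (\<Sum>l\<in>A - T. scale ((-1) ^ card {k\<in>T. k < l} * y l) (c (insert l T)))"
      using True unfolding koszul_omit_def koszul_d_def by simp
    also have "\<dots> = scale ((-1) ^ card {k\<in>T. k < j} * y j) (c (insert j T)) +
        (\<Sum>l\<in>A - {j} - T. scale ((-1) ^ card {k\<in>T. k < l} * y l) (c (insert l T)))"
      unfolding split using assms(1) by (subst sum.insert) auto
    also have "(\<Sum>l\<in>A - {j} - T. scale ((-1) ^ card {k\<in>T. k < l} * y l) (c (insert l T)))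
        = koszul_d scale y (A - {j}) n (koszul_omit j c) T"
      using True unfolding koszul_d_def koszul_omit_def by (auto intro!: sum.cong)
    also have "scale ((-1) ^ card {k\<in>T. k < j} * y j) (c (insert j T)) =
        scale (y j) (koszul_contract scale j c T)"
      using True unfolding koszul_contract_def by (simp add: mult.commute)
    finally show ?thesis by (simp add: add.commute)
  qed
qed

lemma koszul_omit_plus_wedge_contract:
  "c = (\<lambda>T. koszul_omit j c T + koszul_wedge scale j (koszul_contract scale j c) T)"
proof
  fix T
  show "c T = koszul_omit j c T + koszul_wedge scale j (koszul_contract scale j c) T"
  proof (cases "j \<in> T")
    case True
    have "{k\<in>T - {j}. k < j} = {k\<in>T. k < j}" by auto
    with True show ?thesis
      unfolding koszul_omit_def koszul_wedge_def koszul_contract_def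
      by (simp add: insert_absorb)
  next
    case False
    then show ?thesis unfolding koszul_omit_def koszul_wedge_def by simp
  qed
qed

lemma koszul_contract_wedge:
  assumes "\<And>T. j \<in> T \<Longrightarrow> G T = 0"
  shows "koszul_contract scale j (koszul_wedge scale j G) = G"
proof
  fix T
  show "koszul_contract scale j (koszul_wedge scale j G) T = G T"
  proof (cases "j \<in> T")
    case True
    then show ?thesis using assms unfolding koszul_contract_def by simp
  next
    case False
    have "{k\<in>insert j T. k < j} = {k\<in>T. k < j}" by auto
    with False show ?thesis
      unfolding koszul_wedge_def koszul_contract_def by simp
  qed
qed

lemma koszul_omit_wedge: "koszul_omit j (koszul_wedge scale j G) = (\<lambda>_. 0)"
  unfolding koszul_omit_def koszul_wedge_def by auto

lemma koszul_d_wedge: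
  assumes "finite A" "j \<in> A" "G \<in> koszul_chains (A - {j}) n"
  shows "koszul_d scale y A (Suc n) (koszul_wedge scale j G) =
    (\<lambda>T. scale (y j) (G T) - koszul_wedge scale j (koszul_d scale y (A - {j}) n G) T)"
proof -
  let ?X = "koszul_wedge scale j G"
  let ?dX = "koszul_d scale y A (Suc n) ?X"
  have X: "?X \<in> koszul_chains A (Suc n)" by (rule koszul_wedge_chain[OF assms])
  have "koszul_contract scale j ?X = G"
    using assms(3) by (intro koszul_contract_wedge koszul_chains_eq_0) auto
  then have "koszul_omit j ?dX = (\<lambda>T. scale (y j) (G T))"
    and "koszul_contract scale j ?dX = (\<lambda>T. - koszul_d scale y (A - {j}) n G T)"
    using koszul_omit_d[OF assms(1,2) X, of y] koszul_contract_d[OF assms(1,2), where y = y and c = ?X]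
    by (simp_all add: koszul_omit_wedge koszul_d_zero)
  then show ?thesis
    by (subst koszul_omit_plus_wedge_contract[of ?dX j]) (auto simp: koszul_wedge_def)
qed

lemma koszul_contract_zero: "koszul_contract scale j (\<lambda>_. 0) = (\<lambda>_. 0)"
  unfolding koszul_contract_def by (simp add: fun_eq_iff)

lemma koszul_contract_scale_diff:
  "koszul_contract scale j (\<lambda>T. scale a (z T) - u T) =
   (\<lambda>T. scale a (koszul_contract scale j z T) - koszul_contract scale j u T)"
  unfolding koszul_contract_def by (auto simp: scale_right_diff_distrib mult_ac)

subsection \<open>Cycles and boundaries\<close>

lemma koszul_boundariesI:
  "X \<in> koszul_chains A (Suc n) \<Longrightarrow> c = koszul_d scale y A (Suc n) X \<Longrightarrow> c \<in> koszul_boundaries scale y A n"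
  unfolding koszul_boundaries_def by blast

lemma koszul_boundariesE:
  assumes "c \<in> koszul_boundaries scale y A n"
  obtains X where "X \<in> koszul_chains A (Suc n)" "c = koszul_d scale y A (Suc n) X"
  using assms unfolding koszul_boundaries_def by blast

lemma koszul_boundaries_zero: "(\<lambda>_. 0) \<in> koszul_boundaries scale y A n"
  by (rule koszul_boundariesI[OF koszul_chains_zero]) (simp add: koszul_d_zero)

lemma koszul_boundaries_add:
  assumes "c \<in> koszul_boundaries scale y A n" "e \<in> koszul_boundaries scale y A n"
  shows "(\<lambda>T. c T + e T) \<in> koszul_boundaries scale y A n"
proof -
  obtain X X' where "X \<in> koszul_chains A (Suc n)" "X' \<in> koszul_chains A (Suc n)"
    and "c = koszul_d scale y A (Suc n) X" "e = koszul_d scale y A (Suc n) X'"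
    using assms by (metis koszul_boundariesE)
  then show ?thesis by (intro koszul_boundariesI[OF koszul_chains_add]) (simp_all add: koszul_d_add)
qed

lemma koszul_boundaries_diff:
  assumes "c \<in> koszul_boundaries scale y A n" "e \<in> koszul_boundaries scale y A n"
  shows "(\<lambda>T. c T - e T) \<in> koszul_boundaries scale y A n"
proof -
  obtain X X' where "X \<in> koszul_chains A (Suc n)" "X' \<in> koszul_chains A (Suc n)"
    and "c = koszul_d scale y A (Suc n) X" "e = koszul_d scale y A (Suc n) X'"
    using assms by (metis koszul_boundariesE)
  then show ?thesis by (intro koszul_boundariesI[OF koszul_chains_diff]) (simp_all add: koszul_d_diff)
qed

lemma koszul_boundaries_mono:
  assumes "finite A" "D \<subseteq> A" "c \<in> koszul_boundaries scale y D n"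
  shows "c \<in> koszul_boundaries scale y A n"
proof -
  obtain X where X: "X \<in> koszul_chains D (Suc n)" and "c = koszul_d scale y D (Suc n) X"
    using assms(3) by (rule koszul_boundariesE)
  with koszul_d_superset[OF assms(1,2) X] show ?thesis
    by (intro koszul_boundariesI[OF koszul_chains_mono[OF X assms(2)]]) simp
qed

lemma koszul_contract_boundary:
  assumes "finite A" "j \<in> A" "c \<in> koszul_boundaries scale y A (Suc n)"
  shows "koszul_contract scale j c \<in> koszul_boundaries scale y (A - {j}) n"
proof -
  obtain X where X: "X \<in> koszul_chains A (Suc (Suc n))" and c: "c = koszul_d scale y A (Suc (Suc n)) X"
    using assms(3) by (rule koszul_boundariesE)
  have "(\<lambda>T. 0 - koszul_d scale y (A - {j}) (Suc n) (koszul_contract scale j X) T)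
      \<in> koszul_boundaries scale y (A - {j}) n"
    using koszul_contract_chain[OF assms(1) X]
    by (intro koszul_boundaries_diff koszul_boundaries_zero koszul_boundariesI) simp_all
  then show ?thesis using koszul_contract_d[OF assms(1,2), where c = X] c by simp
qed

lemma koszul_contract_cycle:
  assumes "finite A" "j \<in> A" "z \<in> koszul_cycles scale y A (Suc n)"
  shows "koszul_contract scale j z \<in> koszul_cycles scale y (A - {j}) n"
proof -
  have z: "z \<in> koszul_chains A (Suc n)" "koszul_d scale y A (Suc n) z = (\<lambda>_. 0)"
    using assms(3) unfolding koszul_cycles_def by auto
  have "koszul_d scale y (A - {j}) n (koszul_contract scale j z) = (\<lambda>_. 0)"
    using koszul_contract_d[OF assms(1,2), where y = y and n = n and c = z] z(2)
    by (simp add: koszul_contract_zero fun_eq_iff)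
  with koszul_contract_chain[OF assms(1) z(1)] show ?thesis
    unfolding koszul_cycles_def by simp
qed

lemma koszul_cycles_scale:
  "z \<in> koszul_cycles scale y A n \<Longrightarrow> (\<lambda>T. scale a (z T)) \<in> koszul_cycles scale y A n"
  unfolding koszul_cycles_def by (simp add: koszul_chains_scale koszul_d_scale)

lemma koszul_annihilates_iff_singletons:
  "koszul_annihilates scale I y A n \<longleftrightarrow> (\<forall>a\<in>I. koszul_annihilates scale {a} y A n)"
  unfolding koszul_annihilates_def by blast

lemma koszul_boundary_of_insert_boundary:
  assumes "finite E" "s \<notin> E" "koszul_annihilates scale {y s} y E n"
    and c: "c \<in> koszul_chains E n" "c \<in> koszul_boundaries scale y (insert s E) n"
  shows "c \<in> koszul_boundaries scale y E n"
proof -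
  let ?F = "insert s E"
  have F: "finite ?F" "s \<in> ?F" "?F - {s} = E" using assms(1,2) by auto
  obtain X where X: "X \<in> koszul_chains ?F (Suc n)" and cX: "c = koszul_d scale y ?F (Suc n) X"
    using c(2) by (rule koszul_boundariesE)
  have c_s: "c T = 0" if "s \<in> T" for T
    using koszul_chains_eq_0[OF c(1)] that assms(2) by blast
  then have "koszul_contract scale s c = (\<lambda>_. 0)"
    unfolding koszul_contract_def by (simp add: fun_eq_iff)
  then have "koszul_d scale y E n (koszul_contract scale s X) = (\<lambda>_. 0)"
    using koszul_contract_d[OF F(1,2), where y = y and c = X] cX F(3) by (simp add: fun_eq_iff)
  with koszul_contract_chain[OF F(1) X, of s] F(3)
  have "koszul_contract scale s X \<in> koszul_cycles scale y E n"
    unfolding koszul_cycles_def by simp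
  then have "(\<lambda>T. scale (y s) (koszul_contract scale s X T)) \<in> koszul_boundaries scale y E n"
    using assms(3) unfolding koszul_annihilates_def by blast
  moreover have "koszul_d scale y E (Suc n) (koszul_omit s X) \<in> koszul_boundaries scale y E n"
    using koszul_omit_chain[OF X, of s] F(3) by (intro koszul_boundariesI) simp_all
  moreover have "c = koszul_omit s c"
    unfolding koszul_omit_def by (simp add: c_s fun_eq_iff)
  then have "c = (\<lambda>T. koszul_d scale y E (Suc n) (koszul_omit s X) T +
      scale (y s) (koszul_contract scale s X T))"
    using koszul_omit_d[OF F(1,2) X, of y] cX F(3) by simp
  ultimately show ?thesis using koszul_boundaries_add by simp
qed

lemma koszul_boundary_of_superset_boundary:
  assumes "finite F" "E \<subseteq> F"
    and ann: "\<forall>E'\<subseteq>F. \<forall>s\<in>F. koszul_annihilates scale {y s} y E' n"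
    and c: "c \<in> koszul_chains E n" "c \<in> koszul_boundaries scale y F n"
  shows "c \<in> koszul_boundaries scale y E n"
proof -
  have "c \<in> koszul_boundaries scale y E n"
    if "finite S" "S \<subseteq> F - E" "c \<in> koszul_boundaries scale y (E \<union> S) n" for S
    using that
  proof (induction S rule: finite_subset_induct')
    case (insert s S)
    have "c \<in> koszul_boundaries scale y (E \<union> S) n"
    proof (rule koszul_boundary_of_insert_boundary)
      show "finite (E \<union> S)" using insert.hyps finite_subset[OF assms(2,1)] by simp
      show "s \<notin> E \<union> S" using insert.hyps by blast
      have "E \<union> S \<subseteq> F" "s \<in> F" using insert.hyps(2,3) assms(2) by auto
      then show "koszul_annihilates scale {y s} y (E \<union> S) n" using ann by blast
      show "c \<in> koszul_chains (E \<union> S) n" by (rule koszul_chains_mono[OF c(1)]) blast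
      show "c \<in> koszul_boundaries scale y (insert s (E \<union> S)) n" using insert.prems by simp
    qed
    then show ?case by (rule insert.IH)
  qed simp
  from this[of "F - E"] show ?thesis
    using assms(1,2) c(2) by (simp add: Un_absorb1)
qed

subsection \<open>Annihilation of Koszul homology\<close>

lemma koszul_cycle_exchange:
  assumes "finite D" "j \<in> D" "u \<in> koszul_cycles scale y D n"
    and G: "G \<in> koszul_chains (D - {j}) n" "koszul_contract scale j u = koszul_d scale y (D - {j}) n G"
  shows "(\<lambda>T. koszul_omit j u T + scale (y j) (G T)) \<in> koszul_cycles scale y (D - {j}) n"
    and "koszul_omit j u T + scale (y j) (G T) =
         u T + koszul_d scale y D (Suc n) (koszul_wedge scale j G) T"
proof -
  have u: "u \<in> koszul_chains D n" "koszul_d scale y D n u = (\<lambda>_. 0)"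
    using assms(3) unfolding koszul_cycles_def by auto
  have "koszul_d scale y (D - {j}) n (\<lambda>T. koszul_omit j u T + scale (y j) (G T)) =
      (\<lambda>T. koszul_d scale y (D - {j}) n (koszul_omit j u) T + scale (y j) (koszul_contract scale j u T))"
    by (simp add: koszul_d_add koszul_d_scale G(2))
  also have "\<dots> = koszul_omit j (koszul_d scale y D n u)"
    by (rule koszul_omit_d[OF assms(1,2) u(1), symmetric])
  also have "\<dots> = (\<lambda>_. 0)"
    unfolding u(2) koszul_omit_def by simp
  finally show "(\<lambda>T. koszul_omit j u T + scale (y j) (G T)) \<in> koszul_cycles scale y (D - {j}) n"
    unfolding koszul_cycles_def
    using koszul_chains_add[OF koszul_omit_chain[OF u(1)] koszul_chains_scale[OF G(1)]] by simp
  have "u T = koszul_omit j u T + koszul_wedge scale j (koszul_contract scale j u) T"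
    by (subst koszul_omit_plus_wedge_contract[of u j]) simp
  then show "koszul_omit j u T + scale (y j) (G T) =
      u T + koszul_d scale y D (Suc n) (koszul_wedge scale j G) T"
    using koszul_d_wedge[OF assms(1,2) G(1), of y] G(2) by simp
qed

lemma koszul_scaled_cycle_remove_index:
  assumes "finite A" "D \<subseteq> A" "j \<in> D"
    and z: "z \<in> koszul_cycles scale y A (Suc n)"
    and ann_a: "koszul_annihilates scale {a} y (A - {j}) n"
    and ann_y: "\<forall>E\<subseteq>A - {j}. \<forall>s\<in>A - {j}. koszul_annihilates scale {y s} y E n"
    and u: "u \<in> koszul_cycles scale y D (Suc n)"
    and rel: "(\<lambda>T. scale a (z T) - u T) \<in> koszul_boundaries scale y A (Suc n)"
  shows "\<exists>u'\<in>koszul_cycles scale y (D - {j}) (Suc n).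
           (\<lambda>T. scale a (z T) - u' T) \<in> koszul_boundaries scale y A (Suc n)"
proof -
  have j: "j \<in> A" using assms(2,3) by blast
  have D: "finite D" using assms(2,1) by (rule finite_subset)
  have "(\<lambda>T. scale a (koszul_contract scale j z T)) \<in> koszul_boundaries scale y (A - {j}) n"
    using ann_a koszul_contract_cycle[OF assms(1) j z] unfolding koszul_annihilates_def by blast
  from koszul_boundaries_diff[OF this koszul_contract_boundary[OF assms(1) j rel]]
  have bnd: "koszul_contract scale j u \<in> koszul_boundaries scale y (A - {j}) n"
    by (simp add: koszul_contract_scale_diff)
  have chain: "koszul_contract scale j u \<in> koszul_chains (D - {j}) n"
    using u koszul_contract_chain[OF D] unfolding koszul_cycles_def by blast
  from koszul_boundary_of_superset_boundary[OF _ _ ann_y chain bnd]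
  have "koszul_contract scale j u \<in> koszul_boundaries scale y (D - {j}) n"
    using assms(1,2) by auto
  then obtain G where G: "G \<in> koszul_chains (D - {j}) (Suc n)"
    and uG: "koszul_contract scale j u = koszul_d scale y (D - {j}) (Suc n) G"
    by (rule koszul_boundariesE)
  have "koszul_d scale y D (Suc (Suc n)) (koszul_wedge scale j G) \<in> koszul_boundaries scale y A (Suc n)"
    using koszul_wedge_chain[OF D assms(3) G]
    by (intro koszul_boundaries_mono[OF assms(1,2)] koszul_boundariesI) simp_all
  from koszul_boundaries_diff[OF rel this]
  have "(\<lambda>T. scale a (z T) - (u T + koszul_d scale y D (Suc (Suc n)) (koszul_wedge scale j G) T))
      \<in> koszul_boundaries scale y A (Suc n)"
    by (simp add: diff_diff_eq)
  then have "(\<lambda>T. scale a (z T) - (koszul_omit j u T + scale (y j) (G T)))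
      \<in> koszul_boundaries scale y A (Suc n)"
    by (simp only: koszul_cycle_exchange(2)[OF D assms(3) u G uG])
  show ?thesis
  proof (rule bexI)
    show "(\<lambda>T. koszul_omit j u T + scale (y j) (G T)) \<in> koszul_cycles scale y (D - {j}) (Suc n)"
      by (rule koszul_cycle_exchange(1)[OF D assms(3) u G uG])
  qed fact
qed

lemma koszul_scaled_cycle_homologous_to_cycle_on_Diff:
  assumes "finite A" "S \<subseteq> A"
    and z: "z \<in> koszul_cycles scale y A (Suc n)"
    and ann_a: "\<forall>j\<in>A. koszul_annihilates scale {a} y (A - {j}) n"
    and ann_y: "\<forall>E\<subseteq>A. \<forall>s\<in>A. koszul_annihilates scale {y s} y E n"
  shows "\<exists>u\<in>koszul_cycles scale y (A - S) (Suc n).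
           (\<lambda>T. scale a (z T) - u T) \<in> koszul_boundaries scale y A (Suc n)"
  using finite_subset[OF assms(2,1)] assms(2)
proof (induction S rule: finite_induct)
  case empty
  show ?case
  proof (rule bexI)
    show "(\<lambda>T. scale a (z T)) \<in> koszul_cycles scale y (A - {}) (Suc n)"
      using koszul_cycles_scale[OF z] by simp
    show "(\<lambda>T. scale a (z T) - scale a (z T)) \<in> koszul_boundaries scale y A (Suc n)"
      using koszul_boundaries_zero by simp
  qed
next
  case (insert j S)
  then obtain u where u: "u \<in> koszul_cycles scale y (A - S) (Suc n)"
    and rel: "(\<lambda>T. scale a (z T) - u T) \<in> koszul_boundaries scale y A (Suc n)"
    by blast
  have j: "j \<in> A - S" and D: "A - S - {j} = A - insert j S" using insert by auto
  then have "koszul_annihilates scale {a} y (A - {j}) n" using ann_a by blast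
  moreover have "\<forall>E\<subseteq>A - {j}. \<forall>s\<in>A - {j}. koszul_annihilates scale {y s} y E n"
    using ann_y by blast
  ultimately show ?case
    by (rule koszul_scaled_cycle_remove_index[OF assms(1) Diff_subset j z _ _ u rel, unfolded D])
qed

lemma koszul_annihilates_Suc:
  assumes "finite A"
    and "\<forall>j\<in>A. koszul_annihilates scale {a} y (A - {j}) n"
    and "\<forall>E\<subseteq>A. \<forall>s\<in>A. koszul_annihilates scale {y s} y E n"
  shows "koszul_annihilates scale {a} y A (Suc n)"
  unfolding koszul_annihilates_def
proof (intro ballI)
  fix b z assume "b \<in> {a}" "z \<in> koszul_cycles scale y A (Suc n)"
  then obtain u where "u \<in> koszul_cycles scale y {} (Suc n)"
    and "(\<lambda>T. scale b (z T) - u T) \<in> koszul_boundaries scale y A (Suc n)"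
    using koszul_scaled_cycle_homologous_to_cycle_on_Diff[OF assms(1) order_refl _ assms(2,3)] by auto
  moreover from this(1) have "u = (\<lambda>_. 0)"
    unfolding koszul_cycles_def by (blast intro: koszul_chains_empty_Suc)
  ultimately show "(\<lambda>T. scale b (z T)) \<in> koszul_boundaries scale y A (Suc n)" by simp
qed

end

theorem corollary2p2:
  fixes scale :: "'a::comm_ring_1 \<Rightarrow> 'b::ab_group_add \<Rightarrow> 'b"
    and y :: "nat \<Rightarrow> 'a" and r i :: nat and I :: "'a set"
  assumes "module scale"
    and "0 < i"
    and "module.subspace ((*) :: 'a \<Rightarrow> 'a \<Rightarrow> 'a) I"
    and "\<forall>j\<in>{1..r}. y j \<in> I"
    and "\<forall>A. A \<subseteq> {1..r} \<longrightarrow> koszul_annihilates scale I y A i"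
  shows "\<forall>A. A \<subseteq> {1..r} \<longrightarrow> koszul_annihilates scale I y A (Suc i)"
proof (intro allI impI)
  interpret module scale by fact
  fix A :: "nat set" assume A: "A \<subseteq> {1..r}"
  have ann: "koszul_annihilates scale {a} y E i" if "a \<in> I" "E \<subseteq> A" for a E
  proof -
    have "koszul_annihilates scale I y E i" using assms(5) A that(2) by blast
    with that(1) show ?thesis using koszul_annihilates_iff_singletons[of I] by blast
  qed
  show "koszul_annihilates scale I y A (Suc i)"
    unfolding koszul_annihilates_iff_singletons[of I]
  proof
    fix a assume "a \<in> I"
    show "koszul_annihilates scale {a} y A (Suc i)"
    proof (rule koszul_annihilates_Suc)
      show "finite A" using A by (rule finite_subset) simp
      show "\<forall>j\<in>A. koszul_annihilates scale {a} y (A - {j}) i" using ann \<open>a \<in> I\<close> by blast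
      show "\<forall>E\<subseteq>A. \<forall>s\<in>A. koszul_annihilates scale {y s} y E i"
        using assms(4) A by (blast intro: ann)
    qed
  qed
qed

end
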